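(* Let $M\in\mathcal S^{n\times n}$ be distinguished and such that $|J_M(U)|$ is odd for every two-element set $U\subseteq\{1,\dots,n\}$. Then there exist an integer $k$ with $2k\ge n$ and $g\in G_n$ such that $M'=gM$ has block form $M'=\begin{bmatrix}A&C\\C^t&B\end{bmatrix}$, where $A$ and $B$ are self-conjugate of degrees $k$ and $n-k$ respectively, and $r_1(M')=\dots=r_k(M')\ne r_{k+1}(M')=\dots=r_n(M')$.
   Context: $\mathcal S=\{0,1,2,3\}$ is the Klein four-group ($\mathbb Z_2$-vector space) with $x+x=0$, $1+2=3$, $1+3=2$, $2+3=1$; conjugation is the involution $\bar0=0,\bar1=1,\bar2=3,\bar3=2$. A square matrix is distinguished if it has $1$ on the diagonal and $2$ or $3$ off the diagonal, and self-conjugate if $A^t=\overline A$. $J_M(U)=\{j:\sum_{i\in U}M_{ij}=1\}$; $r_i(M)=\sum_jM_{ij}$ is the $i$-th row sum. $G_n=C_2\wr S_n$ acts on $\mathcal S^{n\times n}$: the $k$-th generator of $C_2^n$ conjugates the $k$-th column, and $\sigma\in S_n$ acts by $P_\sigma MP_\sigma^{-1}$ (simultaneous permutation of rows and columns). (When $k=n$ the inequality condition is vacuous.) *)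

theory Defs
  imports "HOL-Combinatorics.Permutations"
begin

datatype klein = K0 | K1 | K2 | K3

fun kadd :: "klein \<Rightarrow> klein \<Rightarrow> klein" where
  "kadd K0 y = y"
| "kadd x K0 = x"
| "kadd K1 K1 = K0" | "kadd K1 K2 = K3" | "kadd K1 K3 = K2"
| "kadd K2 K1 = K3" | "kadd K2 K2 = K0" | "kadd K2 K3 = K1"
| "kadd K3 K1 = K2" | "kadd K3 K2 = K1" | "kadd K3 K3 = K0"

instantiation klein :: comm_monoid_add
begin
definition zero_klein_def: "(0::klein) = K0"
definition plus_klein_def: "(x::klein) + y = kadd x y"
instance
proof
  fix a b c :: klein
  show "a + b + c = a + (b + c)" unfolding plus_klein_def
    by (cases a; cases b; cases c) simp_all
  show "a + b = b + a" unfolding plus_klein_def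
    by (cases a; cases b) simp_all
  show "0 + a = a" unfolding plus_klein_def zero_klein_def by simp
qed
end

fun kconj :: "klein \<Rightarrow> klein" where
  "kconj K0 = K0" | "kconj K1 = K1" | "kconj K2 = K3" | "kconj K3 = K2"

text \<open>n x n matrices over S are functions nat => nat => klein, indices 0..n-1
  (entries outside the range are irrelevant).\<close>
type_synonym kmat = "nat \<Rightarrow> nat \<Rightarrow> klein"

definition distinguished :: "nat \<Rightarrow> kmat \<Rightarrow> bool" where
  "distinguished n M \<longleftrightarrow> (\<forall>i<n. M i i = K1) \<and>
     (\<forall>i<n. \<forall>j<n. i \<noteq> j \<longrightarrow> M i j = K2 \<or> M i j = K3)"

definition J :: "nat \<Rightarrow> kmat \<Rightarrow> nat set \<Rightarrow> nat set" where
  "J n M U = {j. j < n \<and> (\<Sum>i\<in>U. M i j) = K1}"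

definition row_sum :: "nat \<Rightarrow> kmat \<Rightarrow> nat \<Rightarrow> klein" where
  "row_sum n M i = (\<Sum>j<n. M i j)"

definition self_conj_on :: "nat set \<Rightarrow> kmat \<Rightarrow> bool" where
  "self_conj_on I M \<longleftrightarrow> (\<forall>i\<in>I. \<forall>j\<in>I. M j i = kconj (M i j))"

text \<open>The group G_n = C_2 wr S_n: pairs (eps, sigma), eps selecting the columns
  to be conjugated, sigma a permutation of {0..n-1}.\<close>
definition Gn :: "nat \<Rightarrow> ((nat \<Rightarrow> bool) \<times> (nat \<Rightarrow> nat)) set" where
  "Gn n = {(eps, \<sigma>). \<sigma> permutes {..<n} \<and> (\<forall>j\<ge>n. \<not> eps j)}"

text \<open>Action: first P_sigma M P_sigma^{-1}, then conjugate the selected columns.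
  (Every element of G_n is such a product.)\<close>
definition Gact :: "(nat \<Rightarrow> bool) \<times> (nat \<Rightarrow> nat) \<Rightarrow> kmat \<Rightarrow> kmat" where
  "Gact g M = (\<lambda>i j. let N = M (inv (snd g) i) (inv (snd g) j)
                     in if fst g j then kconj N else N)"

end

theory Submission
  imports Defs
begin

text \<open>Identify the Klein group with \<open>\<int>\<^sub>2 \<times> \<int>\<^sub>2\<close> via \<open>1 = (1,0)\<close>, \<open>2 = (0,1)\<close>,
  \<open>3 = (1,1)\<close>; conjugation is then \<open>(x,y) \<mapsto> (x+y,y)\<close>. Off the diagonal of a distinguished
  matrix the second coordinate is always 1, so the second coordinate of a row sum is the
  constant \<open>n - 1\<close> and a row sum is determined by the parity of the first coordinates in the
  row. For rows \<open>a \<noteq> b\<close>, the column \<open>j \<notin> {a,b}\<close> lies in \<open>J {a,b}\<close> exactly when the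
  first coordinates of \<open>M a j\<close> and \<open>M b j\<close> differ, and the columns \<open>a\<close>, \<open>b\<close> never do.
  Hence \<open>|J {a,b}|\<close> odd means: \<open>M b a = conj (M a b)\<close> if rows \<open>a\<close> and \<open>b\<close> have the same
  parity, and \<open>M b a = M a b\<close> otherwise. Moving the larger parity class to the front by a
  simultaneous permutation of rows and columns gives the required block form.\<close>

fun kfst :: "klein \<Rightarrow> nat" where
  "kfst K0 = 0" | "kfst K1 = 1" | "kfst K2 = 0" | "kfst K3 = 1"

fun ksnd :: "klein \<Rightarrow> nat" where
  "ksnd K0 = 0" | "ksnd K1 = 0" | "ksnd K2 = 1" | "ksnd K3 = 1"

lemma klein_eq_iff: "x = y \<longleftrightarrow> kfst x = kfst y \<and> ksnd x = ksnd y"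
  by (cases x; cases y) simp_all

lemma even_kfst_add: "even (kfst (x + y)) \<longleftrightarrow> even (kfst x + kfst y)"
  unfolding plus_klein_def by (cases x; cases y) simp_all

lemma even_ksnd_add: "even (ksnd (x + y)) \<longleftrightarrow> even (ksnd x + ksnd y)"
  unfolding plus_klein_def by (cases x; cases y) simp_all

lemma even_hom_sum:
  fixes h :: "klein \<Rightarrow> nat"
  assumes add: "\<And>x y. even (h (x + y)) \<longleftrightarrow> even (h x + h y)" and zero: "even (h 0)"
  shows "even (h (sum f A)) \<longleftrightarrow> even (\<Sum>j\<in>A. h (f j))"
proof (induction A rule: infinite_finite_induct)
  case (insert x F)
  then show ?case by (simp add: add)
qed (simp_all add: zero)

lemmas even_kfst_sum = even_hom_sum[OF even_kfst_add, unfolded zero_klein_def, simplified]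
lemmas even_ksnd_sum = even_hom_sum[OF even_ksnd_add, unfolded zero_klein_def, simplified]

definition row_parity :: "nat \<Rightarrow> kmat \<Rightarrow> nat \<Rightarrow> bool" where
  "row_parity n M i \<longleftrightarrow> even (\<Sum>j<n. kfst (M i j))"

lemma distinguished_diag: "distinguished n M \<Longrightarrow> i < n \<Longrightarrow> M i i = K1"
  unfolding distinguished_def by blast

lemma distinguished_offdiag:
  "distinguished n M \<Longrightarrow> i < n \<Longrightarrow> j < n \<Longrightarrow> i \<noteq> j \<Longrightarrow> M i j \<in> {K2, K3}"
  unfolding distinguished_def by blast

lemma sum_ksnd_row:
  assumes M: "distinguished n M" and a: "a < n"
  shows "(\<Sum>j<n. ksnd (M a j)) = n - 1"
proof -
  have "(\<Sum>j<n. ksnd (M a j)) = ksnd (M a a) + (\<Sum>j\<in>{..<n} - {a}. ksnd (M a j))"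
    using a by (simp add: sum.remove)
  also have "(\<Sum>j\<in>{..<n} - {a}. ksnd (M a j)) = (\<Sum>j\<in>{..<n} - {a}. 1)"
    by (rule sum.cong) (use distinguished_offdiag[OF M a] in fastforce)+
  finally show ?thesis using a by (simp add: distinguished_diag[OF M a])
qed

lemma row_sum_eq_iff_row_parity:
  assumes M: "distinguished n M" and ab: "a < n" "b < n"
  shows "row_sum n M a = row_sum n M b \<longleftrightarrow> row_parity n M a = row_parity n M b"
proof -
  have bit: "x = y \<longleftrightarrow> (even x \<longleftrightarrow> even y)" if "x < 2" "y < 2" for x y :: nat
    using that by presburger
  have kfst_lt: "kfst x < 2" and ksnd_lt: "ksnd x < 2" for x
    by (cases x; simp)+
  have "ksnd (row_sum n M a) = ksnd (row_sum n M b)"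
    using ab by (simp add: bit ksnd_lt row_sum_def even_ksnd_sum sum_ksnd_row[OF M])
  moreover have "kfst (row_sum n M a) = kfst (row_sum n M b)
      \<longleftrightarrow> row_parity n M a = row_parity n M b"
    by (simp add: bit kfst_lt row_sum_def row_parity_def even_kfst_sum)
  ultimately show ?thesis
    using klein_eq_iff by blast
qed

lemma even_card_filter_iff_even_sum:
  fixes f :: "'a \<Rightarrow> nat"
  assumes "finite A" and "\<And>j. j \<in> A \<Longrightarrow> P j \<longleftrightarrow> odd (f j)"
  shows "even (card {j\<in>A. P j}) \<longleftrightarrow> even (sum f A)"
  using assms
proof (induction A rule: finite_induct)
  case (insert x F)
  have "{j \<in> insert x F. P j} = (if P x then insert x {j\<in>F. P j} else {j\<in>F. P j})"
    by auto
  with insert show ?case by auto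
qed simp

lemma even_card_J_pair:
  assumes M: "distinguished n M" and ab: "a < n" "b < n" "a \<noteq> b"
  shows "even (card (J n M {a, b})) \<longleftrightarrow>
    even ((\<Sum>j<n. kfst (M a j)) + (\<Sum>j<n. kfst (M b j)) + kfst (M a b) + kfst (M b a))"
proof -
  define R where "R = {..<n} - {a, b}"
  have diag: "M a a = K1" "M b b = K1"
    using ab distinguished_diag[OF M] by auto
  have off: "M a b \<in> {K2, K3}" "M b a \<in> {K2, K3}"
    using ab distinguished_offdiag[OF M] by auto
  have off_R: "M a j \<in> {K2, K3}" "M b j \<in> {K2, K3}" if "j \<in> R" for j
    using that ab distinguished_offdiag[OF M] by (auto simp: R_def)
  have "(\<Sum>i\<in>{a, b}. M i j) = M a j + M b j" for j
    using ab by simp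
  then have "J n M {a, b} = {j\<in>R. M a j + M b j = K1}"
    using ab diag off by (auto simp: J_def R_def plus_klein_def)
  moreover have "M a j + M b j = K1 \<longleftrightarrow> odd (kfst (M a j) + kfst (M b j))" if "j \<in> R" for j
    using off_R[OF that] by (auto simp: plus_klein_def)
  ultimately have "even (card (J n M {a, b})) \<longleftrightarrow>
      even (\<Sum>j\<in>R. kfst (M a j) + kfst (M b j))"
    using even_card_filter_iff_even_sum[of R] by (simp add: R_def)
  moreover have "(\<Sum>j<n. kfst (M a j)) + (\<Sum>j<n. kfst (M b j)) =
      (\<Sum>j\<in>R. kfst (M a j) + kfst (M b j)) + 2 + kfst (M a b) + kfst (M b a)"
    using ab diag
    by (simp add: R_def sum.subset_diff[of "{a, b}" "{..<n}"] sum.distrib)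
  ultimately show ?thesis
    by presburger
qed

lemma kfst_transpose_eq_iff:
  assumes M: "distinguished n M" and ab: "a < n" "b < n" "a \<noteq> b"
    and odd: "odd (card (J n M {a, b}))"
  shows "kfst (M b a) = kfst (M a b) \<longleftrightarrow> row_parity n M a \<noteq> row_parity n M b"
proof -
  have "kfst (M a b) < 2" "kfst (M b a) < 2"
    by (cases "M a b"; simp) (cases "M b a"; simp)
  then show ?thesis
    using odd even_card_J_pair[OF M ab] unfolding row_parity_def by presburger
qed

lemma transpose_entry_same_parity:
  assumes M: "distinguished n M"
    and odd: "\<forall>U. U \<subseteq> {..<n} \<and> card U = 2 \<longrightarrow> odd (card (J n M U))"
    and ab: "a < n" "b < n" and same: "row_parity n M a = row_parity n M b"
  shows "M b a = kconj (M a b)"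
proof (cases "a = b")
  case True
  then show ?thesis using distinguished_diag[OF M ab(1)] by simp
next
  case False
  then have "kfst (M b a) \<noteq> kfst (M a b)"
    using kfst_transpose_eq_iff[OF M ab False] odd ab same by auto
  then show ?thesis
    using distinguished_offdiag[OF M ab False] distinguished_offdiag[OF M ab(2,1)] False
    by auto
qed

lemma transpose_entry_diff_parity:
  assumes M: "distinguished n M"
    and odd: "\<forall>U. U \<subseteq> {..<n} \<and> card U = 2 \<longrightarrow> odd (card (J n M U))"
    and ab: "a < n" "b < n" and diff: "row_parity n M a \<noteq> row_parity n M b"
  shows "M b a = M a b"
proof -
  have "a \<noteq> b" using diff by blast
  then have "kfst (M b a) = kfst (M a b)"
    using kfst_transpose_eq_iff[OF M ab] odd ab diff by auto
  then show ?thesis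
    using distinguished_offdiag[OF M ab \<open>a \<noteq> b\<close>] distinguished_offdiag[OF M ab(2,1)]
      \<open>a \<noteq> b\<close>
    by auto
qed

lemma majority_value:
  fixes P :: "'a \<Rightarrow> bool"
  assumes "finite A"
  shows "\<exists>c. card A \<le> 2 * card {x\<in>A. P x = c}"
proof -
  have "card A = card {x\<in>A. P x = True} + card {x\<in>A. P x = False}"
    using assms by (subst card_Un_disjoint[symmetric]) (auto intro: arg_cong[where f = card])
  then show ?thesis
    by (cases "card {x\<in>A. P x = False} \<le> card {x\<in>A. P x = True}")
      (use exI[where x = True] exI[where x = False] in fastforce)+
qed

lemma permutes_to_front:
  assumes X: "X \<subseteq> {..<n}"
  obtains \<sigma> where "\<sigma> permutes {..<n}" and "\<And>i. i < n \<Longrightarrow> \<sigma> i \<in> X \<longleftrightarrow> i < card X"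
proof
  define Y where "Y = {..<n} - X"
  define xs where "xs = sorted_list_of_set X @ sorted_list_of_set Y"
  define \<sigma> where "\<sigma> i = (if i < n then xs ! i else i)" for i
  have fin: "finite X" "finite Y"
    using X finite_subset by (auto simp: Y_def)
  have XY: "X \<inter> Y = {}" "X \<union> Y = {..<n}"
    using X by (auto simp: Y_def)
  have len: "length xs = n"
    using card_Un_disjoint[OF fin XY(1)] XY(2) by (simp add: xs_def fin)
  have "bij_betw ((!) xs) {..<n} {..<n}"
    by (rule bij_betw_nth) (use fin XY len in \<open>auto simp: xs_def\<close>)
  then have "bij_betw \<sigma> {..<n} {..<n}"
    by (rule bij_betw_cong[THEN iffD1, rotated]) (simp add: \<sigma>_def)
  then show "\<sigma> permutes {..<n}"
    by (rule bij_imp_permutes) (simp add: \<sigma>_def)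
  fix i assume i: "i < n"
  show "\<sigma> i \<in> X \<longleftrightarrow> i < card X"
  proof (cases "i < card X")
    case True
    then have "\<sigma> i = sorted_list_of_set X ! i"
      using i by (simp add: \<sigma>_def xs_def nth_append fin)
    then show ?thesis
      using True fin by (metis nth_mem set_sorted_list_of_set length_sorted_list_of_set)
  next
    case False
    then have "\<sigma> i = sorted_list_of_set Y ! (i - card X)" "i - card X < length (sorted_list_of_set Y)"
      using i len by (simp_all add: \<sigma>_def xs_def nth_append fin)
    then have "\<sigma> i \<in> Y"
      using fin by (metis nth_mem set_sorted_list_of_set)
    then show ?thesis
      using False XY(1) by blast
  qed
qed

lemma permutation_in_Gn: "\<sigma> permutes {..<n} \<Longrightarrow> (\<lambda>_. False, inv \<sigma>) \<in> Gn n"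
  unfolding Gn_def by (simp add: permutes_inv)

lemma Gact_permutation:
  "\<sigma> permutes {..<n} \<Longrightarrow> Gact (\<lambda>_. False, inv \<sigma>) M = (\<lambda>i j. M (\<sigma> i) (\<sigma> j))"
  unfolding Gact_def by (simp add: permutes_inv_inv)

lemma row_sum_permute:
  "\<sigma> permutes {..<n} \<Longrightarrow> row_sum n (\<lambda>i j. M (\<sigma> i) (\<sigma> j)) i = row_sum n M (\<sigma> i)"
  unfolding row_sum_def by (simp add: sum.permute[of \<sigma> "{..<n}" "M (\<sigma> i)"] comp_def)

theorem mainTheorem11:
  fixes n :: nat and M :: kmat
  assumes "distinguished n M"
    and "\<forall>U. U \<subseteq> {..<n} \<and> card U = 2 \<longrightarrow> odd (card (J n M U))"
  shows "\<exists>k g. n \<le> 2 * k \<and> k \<le> n \<and> g \<in> Gn n \<and>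
     (let M' = Gact g M in
        (\<forall>i\<in>{k..<n}. \<forall>j<k. M' i j = M' j i) \<and>
        self_conj_on {..<k} M' \<and> self_conj_on {k..<n} M' \<and>
        (\<forall>i<k. \<forall>j<k. row_sum n M' i = row_sum n M' j) \<and>
        (\<forall>i\<in>{k..<n}. \<forall>j\<in>{k..<n}. row_sum n M' i = row_sum n M' j) \<and>
        (\<forall>i<k. \<forall>j\<in>{k..<n}. row_sum n M' i \<noteq> row_sum n M' j))"
proof -
  obtain c where c: "n \<le> 2 * card {i\<in>{..<n}. row_parity n M i = c}"
    using majority_value[of "{..<n}"] by auto
  define X where "X = {i\<in>{..<n}. row_parity n M i = c}"
  define k where "k = card X"
  obtain \<sigma> where \<sigma>: "\<sigma> permutes {..<n}" and front: "\<And>i. i < n \<Longrightarrow> \<sigma> i \<in> X \<longleftrightarrow> i < k"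
    using permutes_to_front[of X n] by (auto simp: X_def k_def)
  have in_range: "\<sigma> i < n" if "i < n" for i
    using permutes_in_image[OF \<sigma>] that by simp
  have parity: "row_parity n M (\<sigma> i) \<longleftrightarrow> (c \<longleftrightarrow> i < k)" if "i < n" for i
    using front[OF that] in_range[OF that] by (auto simp: X_def)
  have "k \<le> n"
    using card_mono[of "{..<n}" X] by (auto simp: X_def k_def)
  show ?thesis
    unfolding Let_def
    using c \<open>k \<le> n\<close> permutation_in_Gn[OF \<sigma>]
    by (intro exI[of _ k] exI[of _ "(\<lambda>_. False, inv \<sigma>)"])
      (auto simp: X_def k_def Gact_permutation[OF \<sigma>] row_sum_permute[OF \<sigma>] self_conj_on_def
        row_sum_eq_iff_row_parity[OF assms(1)] in_range parity
        intro!: transpose_entry_same_parity[OF assms] transpose_entry_diff_parity[OF assms])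
qed

end
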